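(* Let $d\ge 3$ and let $j$ be an integer with $0\le j\le d-1$. (a) If $d$ is odd and $d-j$ is even, then $\operatorname{triv}(d,j)=\operatorname{sign}(d,j)=\left\lfloor \frac{3d-2j-3}{6}\right\rfloor-\frac{d-j-2}{2}$. (b) If $d$ is odd and $d-j$ is odd, then $\operatorname{triv}(d,j)=\left\lfloor \frac{3d-2j-3}{6}\right\rfloor-\frac{d-j-3}{2}$ and $\operatorname{sign}(d,j)=\left\lfloor \frac{3d-2j-3}{6}\right\rfloor-\frac{d-j-1}{2}$. (c) If $d$ is even and $d-j$ is even, then $\operatorname{triv}(d,j)=\left\lfloor \frac{3d-2j}{6}\right\rfloor-\frac{d-j-2}{2}$ and $\operatorname{sign}(d,j)=\left\lfloor \frac{3d-2j}{6}\right\rfloor-\frac{d-j}{2}$. (d) If $d$ is even and $d-j$ is odd, then $\operatorname{triv}(d,j)=\operatorname{sign}(d,j)=\left\lfloor \frac{3d-2j}{6}\right\rfloor-\frac{d-j-1}{2}$.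
   Context: $\Bbbk$ is an algebraically closed field of characteristic $0$. For an integer $d\ge 1$, $A(d)=\Bbbk[x_1,x_2,x_3]/(x_1^d,x_2^d,x_3^d)=\bigoplus_j A(d)_j$ with its standard grading. $S_3$ acts on $A(d)$ by permuting variables. The linear map $E:A(d)_{j+1}\to A(d)_j$ is defined on the monomial basis by $E(x_1^{a_1}x_2^{a_2}x_3^{a_3})=\sum_{k=1}^{3} a_k(d-a_k)\,x_1^{a_1}\cdots x_k^{a_k-1}\cdots x_3^{a_3}$; it commutes with the $S_3$-action. $\operatorname{triv}(d,j)$ and $\operatorname{sign}(d,j)$ denote the multiplicities of the trivial and sign representations of $S_3$ in $\operatorname{Ker}(E)\cap A(d)_j$. *)

theory Defs
  imports Main "HOL-Library.Function_Algebras" "HOL-Combinatorics.Permutations" "HOL-Computational_Algebra.Polynomial"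
begin

text \<open>Exponent triples (a1,a2,a3) index the monomials x1^a1 x2^a2 x3^a3.
  An element of A(d)_j is represented by its coefficient function, which
  vanishes outside the monomial basis of A(d)_j.\<close>

type_synonym expo = "nat \<times> nat \<times> nat"

definition mbasis :: "nat \<Rightarrow> nat \<Rightarrow> expo set" where
  "mbasis d j = {(a1, a2, a3). a1 < d \<and> a2 < d \<and> a3 < d \<and> a1 + a2 + a3 = j}"

definition Agr :: "nat \<Rightarrow> nat \<Rightarrow> (expo \<Rightarrow> 'a::field) set" where
  "Agr d j = {f. \<forall>m. m \<notin> mbasis d j \<longrightarrow> f m = 0}"

definition cscale :: "'a::field \<Rightarrow> (expo \<Rightarrow> 'a) \<Rightarrow> (expo \<Rightarrow> 'a)" where
  "cscale c f = (\<lambda>m. c * f m)"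

definition vdim :: "(expo \<Rightarrow> 'a::field) set \<Rightarrow> nat" where
  "vdim V = vector_space.dim cscale V"

text \<open>The operator E: the coefficient of x^b in E(f) is
  sum_k (b_k+1)(d-b_k-1) * (coefficient of x^(b+e_k) in f),
  which is exactly the linear extension of
  E(x^a) = sum_k a_k (d-a_k) x^(a-e_k).\<close>
definition Eop :: "nat \<Rightarrow> (expo \<Rightarrow> 'a::field) \<Rightarrow> (expo \<Rightarrow> 'a)" where
  "Eop d f = (\<lambda>(b1, b2, b3).
      of_nat ((b1 + 1) * (d - (b1 + 1))) * f (b1 + 1, b2, b3)
    + of_nat ((b2 + 1) * (d - (b2 + 1))) * f (b1, b2 + 1, b3)
    + of_nat ((b3 + 1) * (d - (b3 + 1))) * f (b1, b2, b3 + 1))"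

definition KerE :: "nat \<Rightarrow> nat \<Rightarrow> (expo \<Rightarrow> 'a::field) set" where
  "KerE d j = {f \<in> Agr d j. Eop d f = (\<lambda>_. 0)}"

text \<open>S3 = permutations of {0,1,2} acting by permuting the variables.\<close>
definition comp3 :: "nat \<Rightarrow> expo \<Rightarrow> nat" where
  "comp3 i m = (case m of (a1, a2, a3) \<Rightarrow> if i = 0 then a1 else if i = 1 then a2 else a3)"

definition pmono :: "(nat \<Rightarrow> nat) \<Rightarrow> expo \<Rightarrow> expo" where
  "pmono \<sigma> m = (comp3 (\<sigma> 0) m, comp3 (\<sigma> 1) m, comp3 (\<sigma> 2) m)"

definition act :: "(nat \<Rightarrow> nat) \<Rightarrow> (expo \<Rightarrow> 'a::field) \<Rightarrow> (expo \<Rightarrow> 'a)" where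
  "act \<sigma> f = (\<lambda>m. f (pmono \<sigma> m))"

text \<open>Each representation is one-dimensional, so its multiplicity is the
  dimension of the corresponding isotypic component.\<close>
definition triv_part :: "nat \<Rightarrow> nat \<Rightarrow> (expo \<Rightarrow> 'a::field) set" where
  "triv_part d j = {f \<in> KerE d j. \<forall>\<sigma>. \<sigma> permutes {0, 1, 2} \<longrightarrow> act \<sigma> f = f}"

definition sign_part :: "nat \<Rightarrow> nat \<Rightarrow> (expo \<Rightarrow> 'a::field) set" where
  "sign_part d j = {f \<in> KerE d j. \<forall>\<sigma>. \<sigma> permutes {0, 1, 2} \<longrightarrow>
                      act \<sigma> f = cscale (of_int (sign \<sigma>)) f}"

definition triv :: "'a::field itself \<Rightarrow> nat \<Rightarrow> nat \<Rightarrow> nat" where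
  "triv _ d j = vdim (triv_part d j :: (expo \<Rightarrow> 'a) set)"

definition sgn_mult :: "'a::field itself \<Rightarrow> nat \<Rightarrow> nat \<Rightarrow> nat" where
  "sgn_mult _ d j = vdim (sign_part d j :: (expo \<Rightarrow> 'a) set)"

end

theory Submission
  imports Defs
begin

text \<open>The operator \<open>E\<close> lowers the degree and \<open>L\<close>, multiplication by \<open>x\<^sub>1 + x\<^sub>2 + x\<^sub>3\<close>,
  raises it. On \<open>A(d)\<^sub>i\<close> with \<open>i + 1 < d\<close> their commutator is the positive scalar
  \<open>3(d - 1) - 2i\<close>, so \<open>E L\<close> is injective there (characteristic 0), and \<open>E\<close> maps every
  \<open>S\<^sub>3\<close>-isotypic part of \<open>A(d)\<^sub>j\<close> onto that of \<open>A(d)\<^sub>j\<^sub>-\<^sub>1\<close>. The multiplicity of a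
  one-dimensional representation in \<open>Ker E \<inter> A(d)\<^sub>j\<close> is therefore a difference of dimensions
  of isotypic parts. Symmetrised monomials give bases of these: for \<open>j < d\<close> the trivial part has one
  basis vector per partition of \<open>j\<close> into at most three parts, the sign part one per partition into
  three distinct parts. The differences of these partition counts are
  \<open>\<lfloor>(j + 2)/2\<rfloor> - \<lfloor>(j + 2)/3\<rfloor>\<close> and \<open>\<lfloor>(j + 1)/2\<rfloor> - \<lfloor>(j + 2)/3\<rfloor>\<close>, which the four parity
  cases turn into the stated floors.\<close>

section \<open>Kernels of linear maps on finitely spanned subspaces\<close>

context vector_space
begin

lemma span_disjoint_parts_eq_zero:
  assumes "independent (A \<union> B)" "A \<inter> B = {}" "x \<in> span A" "x \<in> span B"
  shows "x = 0"
proof -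
  let ?R = "representation (A \<union> B) x"
  have RA: "?R = representation A x" and RB: "?R = representation B x"
    using representation_extend[OF assms(1)] assms(3,4) by blast+
  have zero: "?R b = 0" for b
    using RA RB representation_ne_zero assms(2) by (metis disjoint_iff)
  have "x \<in> span (A \<union> B)"
    using assms(3) span_mono[of A "A \<union> B"] by auto
  from sum_nonzero_representation_eq[OF assms(1) this] zero show ?thesis
    by simp
qed

lemma dim_le_dim_finitely_spanned:
  assumes "U \<subseteq> V" "V \<subseteq> span S" "finite S"
  shows "dim U \<le> dim V"
proof -
  obtain B where B: "B \<subseteq> V" "independent B" "V \<subseteq> span B" "card B = dim V"
    by (rule basis_exists)
  then have "finite B"
    using independent_span_bound[OF assms(3) B(2)] assms(2) by auto
  then show ?thesis
    using dim_le_card[of U B] B assms(1) by auto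
qed

lemma dim_kernel_add_dim_image:
  assumes lin: "Vector_Spaces.linear scale scale f"
    and V: "subspace V" "V \<subseteq> span S" "finite S"
  shows "dim V = dim {x\<in>V. f x = 0} + dim (f ` V)"
proof -
  interpret f: Vector_Spaces.linear scale scale f by fact
  let ?K = "{x\<in>V. f x = 0}"
  obtain BK where BK: "BK \<subseteq> ?K" "independent BK" "?K \<subseteq> span BK"
    by (rule maximal_independent_subset)
  obtain BV where BV: "BK \<subseteq> BV" "BV \<subseteq> V" "independent BV" "V \<subseteq> span BV"
    using maximal_independent_subset_extend[of BK V] BK by auto
  define C where "C = BV - BK"
  have "finite BV"
    using independent_span_bound[OF V(3) BV(3)] BV(2) V(2) by auto
  then have fin: "finite BK" "finite C"
    using BV(1) by (auto simp: C_def intro: finite_subset)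
  have BV_split: "BV = BK \<union> C" "BK \<inter> C = {}"
    using BV(1) by (auto simp: C_def)
  have span_BV: "span BV = V"
    using span_subspace[OF BV(2,4) V(1)] .
  have inj: "inj_on f (span C)"
    unfolding f.inj_on_iff_eq_0[OF subspace_span]
  proof safe
    fix x assume x: "x \<in> span C" "f x = 0"
    then have "x \<in> V"
      using span_mono[of C BV] span_BV by (auto simp: C_def)
    with x BK(3) have "x \<in> span BK" by auto
    with x(1) show "x = 0"
      using span_disjoint_parts_eq_zero BV_split BV(3) by metis
  qed
  have "f ` V \<subseteq> span (f ` C)"
  proof -
    have "f ` V = span (f ` BV)"
      using span_BV f.span_image by auto
    also have "\<dots> \<subseteq> span (f ` C)"
      using BK(1) BV_split span_zero
      by (intro span_minimal) (auto intro: span_base)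
    finally show ?thesis .
  qed
  moreover have "f ` C \<subseteq> f ` V" "independent (f ` C)"
    using BV(2) f.independent_injective_image[OF _ inj] independent_mono[OF BV(3)]
    by (auto simp: C_def)
  ultimately have "dim (f ` V) = card C"
    using basis_card_eq_dim card_image inj_on_subset[OF inj span_superset] by metis
  moreover have "dim V = card BV" "dim ?K = card BK"
    using basis_card_eq_dim BV BK by auto
  ultimately show ?thesis
    using card_Un_disjoint[OF fin BV_split(2)] BV_split(1) by simp
qed

text \<open>If \<open>f \<circ> g\<close> is injective on \<open>U\<close>, then \<open>f\<close> maps \<open>V\<close> onto a space of dimension \<open>dim U\<close>,
  so its kernel has dimension \<open>dim V - dim U\<close>.\<close>

lemma dim_kernel_eq_diff:
  assumes lin: "Vector_Spaces.linear scale scale f" "Vector_Spaces.linear scale scale g"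
    and sub: "subspace U" "subspace V"
    and fin: "U \<subseteq> span S" "finite S" "V \<subseteq> span T" "finite T"
    and maps: "f ` V \<subseteq> U" "g ` U \<subseteq> V"
    and inj: "\<And>x. x \<in> U \<Longrightarrow> f (g x) = 0 \<Longrightarrow> x = 0"
  shows "dim {x\<in>V. f x = 0} = dim V - dim U"
proof -
  have fg: "Vector_Spaces.linear scale scale (f \<circ> g)"
    using Vector_Spaces.linear_compose[OF lin(2,1)] .
  have "dim U = dim {x\<in>U. (f \<circ> g) x = 0} + dim ((f \<circ> g) ` U)"
    by (rule dim_kernel_add_dim_image[OF fg sub(1) fin(1,2)])
  moreover have "{x\<in>U. (f \<circ> g) x = 0} \<subseteq> span {}"
    using inj by auto
  then have "dim {x\<in>U. (f \<circ> g) x = 0} = 0"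
    using dim_le_card[of _ "{}"] by fastforce
  moreover have "dim ((f \<circ> g) ` U) \<le> dim (f ` V)"
    using maps fin by (intro dim_le_dim_finitely_spanned[of _ _ S]) auto
  moreover have "dim (f ` V) \<le> dim U"
    using dim_le_dim_finitely_spanned[OF maps(1) fin(1,2)] .
  moreover have "dim V = dim {x\<in>V. f x = 0} + dim (f ` V)"
    by (rule dim_kernel_add_dim_image[OF lin(1) sub(2) fin(3,4)])
  ultimately show ?thesis by linarith
qed

end

section \<open>The operators \<open>E\<close> and \<open>L\<close>\<close>

interpretation VS: vector_space "cscale :: 'a::field \<Rightarrow> (expo \<Rightarrow> 'a) \<Rightarrow> _"
  by unfold_locales (auto simp: cscale_def fun_eq_iff algebra_simps)

text \<open>Multiplication by \<open>x\<^sub>1 + x\<^sub>2 + x\<^sub>3\<close> in coefficient form; it leaves \<open>A(d)\<close> only when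
  an exponent reaches \<open>d\<close>, which cannot happen from degree \<open>i\<close> with \<open>i + 1 < d\<close>.\<close>

definition Lop :: "(expo \<Rightarrow> 'a::field) \<Rightarrow> (expo \<Rightarrow> 'a)" where
  "Lop f = (\<lambda>(b1, b2, b3).
      (if 0 < b1 then f (b1 - 1, b2, b3) else 0)
    + (if 0 < b2 then f (b1, b2 - 1, b3) else 0)
    + (if 0 < b3 then f (b1, b2, b3 - 1) else 0))"

lemma Agr_eq_zero:
  "f \<in> Agr d i \<Longrightarrow> \<not> (a < d \<and> b < d \<and> c < d \<and> a + b + c = i) \<Longrightarrow> f (a, b, c) = 0"
  by (auto simp: Agr_def mbasis_def)

lemma Agr_eq_zero_degree: "f \<in> Agr d i \<Longrightarrow> a + b + c \<noteq> i \<Longrightarrow> f (a, b, c) = 0"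
  by (simp add: Agr_eq_zero)

lemma AgrI:
  "(\<And>a b c. \<not> (a < d \<and> b < d \<and> c < d \<and> a + b + c = i) \<Longrightarrow> f (a, b, c) = 0) \<Longrightarrow> f \<in> Agr d i"
  by (auto simp: Agr_def mbasis_def)

lemma Eop_Agr:
  assumes "f \<in> Agr d i" "0 < i"
  shows "Eop d f \<in> Agr d (i - 1)"
proof (rule AgrI)
  fix a b c
  assume "\<not> (a < d \<and> b < d \<and> c < d \<and> a + b + c = i - 1)"
  then have "f (a + 1, b, c) = 0" "f (a, b + 1, c) = 0" "f (a, b, c + 1) = 0"
    using assms by (auto intro!: Agr_eq_zero[OF assms(1)])
  then show "Eop d f (a, b, c) = 0"
    by (simp add: Eop_def)
qed

lemma Eop_Agr_0: "f \<in> Agr d 0 \<Longrightarrow> Eop d f = 0"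
  by (auto simp: Eop_def fun_eq_iff Agr_eq_zero_degree)

lemma Lop_Agr:
  assumes "f \<in> Agr d i" "i + 1 < d"
  shows "Lop f \<in> Agr d (i + 1)"
proof (rule AgrI)
  fix a b c
  assume "\<not> (a < d \<and> b < d \<and> c < d \<and> a + b + c = i + 1)"
  with assms(2) have "a + b + c \<noteq> i + 1" by auto
  then show "Lop f (a, b, c) = 0"
    using Agr_eq_zero_degree[OF assms(1)] by (auto simp: Lop_def)
qed

definition Ecoeff :: "nat \<Rightarrow> nat \<Rightarrow> 'a::field" where
  "Ecoeff d a = of_nat (a * (d - a))"

lemma Ecoeff_eq: "a \<le> d \<Longrightarrow> Ecoeff d a = of_nat a * (of_nat d - of_nat a)"
  by (simp add: Ecoeff_def of_nat_diff)

lemma Eop_apply: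
  "Eop d f (b1, b2, b3) = Ecoeff d (b1 + 1) * f (b1 + 1, b2, b3)
     + Ecoeff d (b2 + 1) * f (b1, b2 + 1, b3) + Ecoeff d (b3 + 1) * f (b1, b2, b3 + 1)"
  by (simp add: Eop_def Ecoeff_def)

lemma Eop_cscale: "Eop d (cscale c f) = cscale c (Eop d f)"
  by (auto simp: Eop_def cscale_def fun_eq_iff algebra_simps)

lemma Lop_zero: "Lop 0 = 0"
  by (auto simp: Lop_def fun_eq_iff)

lemma linear_Eop: "Vector_Spaces.linear cscale cscale (Eop d :: (expo \<Rightarrow> 'a::field) \<Rightarrow> _)"
  by (simp add: Vector_Spaces.linear_iff VS.vector_space_axioms)
    (auto simp: Eop_def cscale_def fun_eq_iff algebra_simps)

lemma linear_Lop: "Vector_Spaces.linear cscale cscale (Lop :: (expo \<Rightarrow> 'a::field) \<Rightarrow> _)"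
  by (simp add: Vector_Spaces.linear_iff VS.vector_space_axioms)
    (auto simp: Lop_def cscale_def fun_eq_iff algebra_simps)

text \<open>The commutator \<open>[E, L]\<close> acts on \<open>A(d)\<^sub>i\<close> as multiplication by \<open>3(d - 1) - 2i\<close>:
  on each variable, \<open>(a + 1)(d - a - 1) - a(d - a) = d - 1 - 2a\<close>.\<close>

lemma Eop_Lop_commute:
  fixes f :: "expo \<Rightarrow> 'a::field"
  assumes f: "f \<in> Agr d i" and i: "i + 1 < d"
  shows "Eop d (Lop f) = Lop (Eop d f) + cscale (of_nat (3 * (d - 1) - 2 * i)) f"
proof (rule ext, clarify)
  fix b1 b2 b3
  show "Eop d (Lop f) (b1, b2, b3) = (Lop (Eop d f) + cscale (of_nat (3 * (d - 1) - 2 * i)) f) (b1, b2, b3)"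
  proof (cases "b1 + b2 + b3 = i")
    case False
    then show ?thesis
      using Agr_eq_zero_degree[OF f]
      by (cases b1; cases b2; cases b3) (simp_all add: Eop_def Lop_def cscale_def)
  next
    case True
    then have "b1 + 2 \<le> d" "b2 + 2 \<le> d" "b3 + 2 \<le> d"
      using i by auto
    moreover have h: "(of_nat (3 * (d - 1) - 2 * i) :: 'a) = 3 * of_nat d - 3 - 2 * (of_nat b1 + of_nat b2 + of_nat b3)"
      using i True[symmetric] by (simp add: of_nat_diff algebra_simps)
    ultimately show ?thesis
      unfolding h
      by (cases b1; cases b2; cases b3) (simp_all add: Eop_apply Lop_def cscale_def Ecoeff_eq algebra_simps)
  qed
qed

lemma Lop_Eop_eq_neg_scale:
  fixes f :: "expo \<Rightarrow> 'a::field"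
  assumes "f \<in> Agr d i" "i + 1 < d" "Eop d (Lop f) = cscale (- of_nat n) f"
  shows "Lop (Eop d f) = cscale (- of_nat (n + (3 * (d - 1) - 2 * i))) f"
  using Eop_Lop_commute[OF assms(1,2)] assms(3)
  by (auto simp: fun_eq_iff cscale_def algebra_simps)

lemma Eop_Lop_eigenvector_eq_zero_of_Eop_eq_zero:
  fixes f :: "expo \<Rightarrow> 'a::field_char_0"
  assumes "f \<in> Agr d i" "i + 1 < d" "Eop d (Lop f) = cscale (- of_nat n) f" "Eop d f = 0"
  shows "f = 0"
proof -
  define m where "m = n + (3 * (d - 1) - 2 * i)"
  have "cscale (- of_nat m) f = 0"
    using Lop_Eop_eq_neg_scale[OF assms(1-3)] assms(4) by (simp add: m_def Lop_zero)
  moreover have "m > 0"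
    using assms(2) by (simp add: m_def)
  ultimately show ?thesis
    by (simp add: VS.scale_eq_0_iff)
qed

text \<open>In characteristic 0 all eigenvalues of \<open>E L\<close> on \<open>A(d)\<^sub>i\<close>, \<open>i + 1 < d\<close>, are positive:
  an eigenvector \<open>f\<close> for \<open>-n\<close> yields the eigenvector \<open>E f\<close> one degree lower, with
  eigenvalue \<open>-(n + 3(d - 1) - 2i)\<close>, so \<open>E f = 0\<close> by induction and then \<open>f = 0\<close>.\<close>

lemma Eop_Lop_eigenvector_eq_zero:
  fixes f :: "expo \<Rightarrow> 'a::field_char_0"
  assumes "f \<in> Agr d i" "i + 1 < d" "Eop d (Lop f) = cscale (- of_nat n) f"
  shows "f = 0"
  using assms
proof (induction i arbitrary: n f)
  case (0 n f)
  then show ?case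
    using Eop_Agr_0 by (blast intro: Eop_Lop_eigenvector_eq_zero_of_Eop_eq_zero)
next
  case (Suc i n f)
  have "Eop d f = 0"
  proof (rule Suc.IH)
    show "Eop d f \<in> Agr d i"
      using Eop_Agr[OF Suc.prems(1)] by simp
    show "Eop d (Lop (Eop d f)) = cscale (- of_nat (n + (3 * (d - 1) - 2 * Suc i))) (Eop d f)"
      by (simp only: Lop_Eop_eq_neg_scale[OF Suc.prems] Eop_cscale)
  qed (use Suc.prems(2) in simp)
  with Suc.prems show ?case
    by (rule Eop_Lop_eigenvector_eq_zero_of_Eop_eq_zero)
qed

lemma Eop_Lop_injective:
  fixes f :: "expo \<Rightarrow> 'a::field_char_0"
  assumes "f \<in> Agr d i" "i + 1 < d" "Eop d (Lop f) = 0"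
  shows "f = 0"
  using Eop_Lop_eigenvector_eq_zero[OF assms(1,2), of 0] assms(3)
  by (simp add: cscale_def zero_fun_def)

section \<open>Isotypic components\<close>

text \<open>For \<open>e = 1\<close> and \<open>e = -1\<close> these are the trivial and the sign isotypic parts of \<open>A(d)\<^sub>j\<close>:
  the transpositions \<open>(1 2)\<close> and \<open>(2 3)\<close> generate \<open>S\<^sub>3\<close>.\<close>

definition isotypic :: "'a::field \<Rightarrow> nat \<Rightarrow> nat \<Rightarrow> (expo \<Rightarrow> 'a) set" where
  "isotypic e d j =
    {f \<in> Agr d j. \<forall>a b c. f (b, a, c) = e * f (a, b, c) \<and> f (a, c, b) = e * f (a, b, c)}"

lemma isotypicI:
  "f \<in> Agr d j \<Longrightarrow> (\<And>a b c. f (b, a, c) = e * f (a, b, c)) \<Longrightarrow> (\<And>a b c. f (a, c, b) = e * f (a, b, c))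
    \<Longrightarrow> f \<in> isotypic e d j"
  unfolding isotypic_def by blast

lemma isotypicD:
  assumes "f \<in> isotypic e d j"
  shows isotypic_Agr: "f \<in> Agr d j"
    and isotypic_swap12: "f (b, a, c) = e * f (a, b, c)"
    and isotypic_swap23: "f (a, c, b) = e * f (a, b, c)"
  using assms unfolding isotypic_def by blast+

lemma isotypic_subspace: "VS.subspace (isotypic e d j)"
  unfolding VS.subspace_def
proof (intro conjI ballI allI)
  show "0 \<in> isotypic e d j"
    by (rule isotypicI) (auto simp: Agr_def)
next
  fix f g assume f: "f \<in> isotypic e d j" and g: "g \<in> isotypic e d j"
  show "f + g \<in> isotypic e d j"
  proof (rule isotypicI)
    show "f + g \<in> Agr d j"
      using isotypic_Agr[OF f] isotypic_Agr[OF g] by (simp add: Agr_def)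
    fix a b c
    show "(f + g) (b, a, c) = e * (f + g) (a, b, c)"
      using isotypic_swap12[OF f, of b a c] isotypic_swap12[OF g, of b a c] by (simp add: algebra_simps)
    show "(f + g) (a, c, b) = e * (f + g) (a, b, c)"
      using isotypic_swap23[OF f, of a c b] isotypic_swap23[OF g, of a c b] by (simp add: algebra_simps)
  qed
next
  fix k f assume f: "f \<in> isotypic e d j"
  show "cscale k f \<in> isotypic e d j"
  proof (rule isotypicI)
    show "cscale k f \<in> Agr d j"
      using isotypic_Agr[OF f] by (simp add: Agr_def cscale_def)
    fix a b c
    show "cscale k f (b, a, c) = e * cscale k f (a, b, c)"
      using isotypic_swap12[OF f, of b a c] by (simp add: cscale_def algebra_simps)
    show "cscale k f (a, c, b) = e * cscale k f (a, b, c)"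
      using isotypic_swap23[OF f, of a c b] by (simp add: cscale_def algebra_simps)
  qed
qed

lemma Eop_isotypic:
  assumes f: "f \<in> isotypic e d j" and j: "0 < j"
  shows "Eop d f \<in> isotypic e d (j - 1)"
proof (rule isotypicI)
  show "Eop d f \<in> Agr d (j - 1)"
    using Eop_Agr[OF isotypic_Agr[OF f] j] .
  fix a b c
  show "Eop d f (b, a, c) = e * Eop d f (a, b, c)"
    using isotypic_swap12[OF f, of "b + 1" a c] isotypic_swap12[OF f, of b "a + 1" c]
      isotypic_swap12[OF f, of b a "c + 1"]
    by (simp add: Eop_apply algebra_simps)
  show "Eop d f (a, c, b) = e * Eop d f (a, b, c)"
    using isotypic_swap23[OF f, of "a + 1" c b] isotypic_swap23[OF f, of a "c + 1" b]
      isotypic_swap23[OF f, of a c "b + 1"]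
    by (simp add: Eop_apply algebra_simps)
qed

lemma Lop_isotypic:
  assumes f: "f \<in> isotypic e d i" and i: "i + 1 < d"
  shows "Lop f \<in> isotypic e d (i + 1)"
proof (rule isotypicI)
  show "Lop f \<in> Agr d (i + 1)"
    using Lop_Agr[OF isotypic_Agr[OF f] i] .
  fix a b c
  show "Lop f (b, a, c) = e * Lop f (a, b, c)"
    using isotypic_swap12[OF f, of "b - 1" a c] isotypic_swap12[OF f, of b "a - 1" c]
      isotypic_swap12[OF f, of b a "c - 1"]
    by (cases "a = 0"; cases "b = 0"; cases "c = 0") (simp_all add: Lop_def algebra_simps)
  show "Lop f (a, c, b) = e * Lop f (a, b, c)"
    using isotypic_swap23[OF f, of "a - 1" c b] isotypic_swap23[OF f, of a "c - 1" b]
      isotypic_swap23[OF f, of a c "b - 1"]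
    by (cases "a = 0"; cases "b = 0"; cases "c = 0") (simp_all add: Lop_def algebra_simps)
qed

lemma comp3_pmono: "k \<in> {0, 1, 2} \<Longrightarrow> comp3 k (pmono t m) = comp3 (t k) m"
  by (auto simp: pmono_def comp3_def[of k])

lemma act_comp:
  assumes "p permutes {0, 1, 2}"
  shows "act (t \<circ> p) f = act t (act p f)"
proof -
  have "pmono (t \<circ> p) m = pmono p (pmono t m)" for m
    using permutes_in_image[OF assms] by (simp add: pmono_def[of p] pmono_def[of "t \<circ> p"] comp3_pmono)
  then show ?thesis
    by (simp add: act_def)
qed

lemma act_cscale: "act \<sigma> (cscale c f) = cscale c (act \<sigma> f)"
  by (simp add: act_def cscale_def)

lemma act_transpose_isotypic:
  fixes f :: "expo \<Rightarrow> 'a::field"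
  assumes f: "f \<in> isotypic e d j" and e: "e * e = 1"
    and ab: "a \<in> {0, 1, 2}" "b \<in> {0, 1, 2}" "a \<noteq> b"
  shows "act (Transposition.transpose a b) f = cscale e f"
proof (rule ext, clarify)
  fix x y z
  have swap12: "f (y, x, z) = e * f (x, y, z)" and swap23: "f (x, z, y) = e * f (x, y, z)"
    using isotypicD[OF f] by blast+
  have "f (z, y, x) = e * (e * (e * f (x, y, z)))"
    using isotypic_swap12[OF f, of z y x] isotypic_swap23[OF f, of y z x] swap12 by simp
  then have swap13: "f (z, y, x) = e * f (x, y, z)"
    using e by (simp add: mult.assoc[symmetric])
  have "(a, b) \<in> {(0, 1), (1, 0), (0, 2), (2, 0), (1, 2), (2, 1)}"
    using ab by auto
  then show "act (Transposition.transpose a b) f (x, y, z) = cscale e f (x, y, z)"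
    by (elim insertE emptyE)
      (simp_all add: act_def cscale_def pmono_def comp3_def transpose_def swap12 swap23 swap13)
qed

lemma isotypic_iff_act:
  fixes e :: "'a::field"
  assumes e: "e * e = 1"
  shows "f \<in> isotypic e d j \<longleftrightarrow>
    f \<in> Agr d j \<and> (\<forall>\<sigma>. \<sigma> permutes {0, 1, 2} \<longrightarrow> act \<sigma> f = cscale (if evenperm \<sigma> then 1 else e) f)"
proof safe
  assume f: "f \<in> isotypic e d j"
  show "f \<in> Agr d j"
    using isotypic_Agr[OF f] .
  fix \<sigma> :: "nat \<Rightarrow> nat"
  assume "\<sigma> permutes {0, 1, 2}"
  moreover have "finite {0, 1, 2 :: nat}"
    by simp
  ultimately show "act \<sigma> f = cscale (if evenperm \<sigma> then 1 else e) f"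
  proof (induction \<sigma> rule: permutes_induct)
    case id
    then show ?case
      by (auto simp: act_def pmono_def comp3_def cscale_def fun_eq_iff)
  next
    case (swap a b p)
    have p: "p permutes {0, 1, 2}" and ab: "a \<in> {0, 1, 2}" "b \<in> {0, 1, 2}" "a \<noteq> b"
      by fact+
    have "permutation p"
      using permutes_imp_permutation[OF _ p] by simp
    then have "evenperm (Transposition.transpose a b \<circ> p) \<longleftrightarrow> \<not> evenperm p"
      using ab(3) by (simp add: evenperm_comp permutation_swap_id evenperm_swap)
    moreover have "act (Transposition.transpose a b \<circ> p) f
        = cscale (if evenperm p then 1 else e) (cscale e f)"
      by (simp only: act_comp[OF p] swap.IH act_cscale act_transpose_isotypic[OF f e ab])
    ultimately have "act (Transposition.transpose a b \<circ> p) f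
        = cscale (if evenperm (Transposition.transpose a b \<circ> p) then 1 else e) f"
      using e by (cases "evenperm p") (simp_all add: VS.scale_scale)
    then show ?case
      by (simp add: comp_def)
  qed
next
  assume f: "f \<in> Agr d j"
    and act: "\<forall>\<sigma>. \<sigma> permutes {0, 1, 2} \<longrightarrow> act \<sigma> f = cscale (if evenperm \<sigma> then 1 else e) f"
  have swap: "act (Transposition.transpose a b) f = cscale e f"
    if "a \<in> {0, 1, 2}" "b \<in> {0, 1, 2}" "a \<noteq> b" for a b
    using act permutes_swap_id[OF that(1,2)] that(3) by (simp add: evenperm_swap)
  show "f \<in> isotypic e d j"
  proof (rule isotypicI[OF f])
    fix a b c
    show "f (b, a, c) = e * f (a, b, c)"
      using fun_cong[OF swap[of 0 1], of "(a, b, c)"]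
      by (simp add: act_def cscale_def pmono_def comp3_def transpose_def)
    show "f (a, c, b) = e * f (a, b, c)"
      using fun_cong[OF swap[of 1 2], of "(a, b, c)"]
      by (simp add: act_def cscale_def pmono_def comp3_def transpose_def)
  qed
qed

lemma triv_part_eq: "triv_part d j = {f \<in> isotypic 1 d j. Eop d f = 0}"
proof -
  have "f \<in> isotypic 1 d j \<longleftrightarrow> f \<in> Agr d j \<and> (\<forall>\<sigma>. \<sigma> permutes {0, 1, 2} \<longrightarrow> act \<sigma> f = f)"
    for f :: "expo \<Rightarrow> 'a"
    using isotypic_iff_act[of 1 f d j] by simp
  then show ?thesis
    unfolding triv_part_def KerE_def zero_fun_def by blast
qed

lemma sign_part_eq:
  "(sign_part d j :: (expo \<Rightarrow> 'a::field) set) = {f \<in> isotypic (- 1) d j. Eop d f = 0}"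
proof -
  have "f \<in> isotypic (- 1) d j \<longleftrightarrow>
      f \<in> Agr d j \<and> (\<forall>\<sigma>. \<sigma> permutes {0, 1, 2} \<longrightarrow> act \<sigma> f = cscale (of_int (sign \<sigma>)) f)"
    for f :: "expo \<Rightarrow> 'a"
    using isotypic_iff_act[of "- 1" f d j] by (simp add: sign_def if_distrib)
  then show ?thesis
    unfolding sign_part_def KerE_def zero_fun_def by blast
qed

section \<open>Bases of symmetrised monomials\<close>

lemma sum_fun_apply: "(\<Sum>i\<in>S. g i) x = (\<Sum>i\<in>S. g i x)"
  by (induction S rule: infinite_finite_induct) auto

lemma dim_eq_card_of_delta_family:
  fixes g :: "expo \<Rightarrow> expo \<Rightarrow> 'a::field" and W :: "(expo \<Rightarrow> 'a) set"
  assumes fin: "finite S" and mem: "g ` S \<subseteq> W" and span: "W \<subseteq> VS.span (g ` S)"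
    and delta: "\<And>m m'. m \<in> S \<Longrightarrow> m' \<in> S \<Longrightarrow> g m m' = (if m = m' then 1 else 0)"
  shows "VS.dim W = card S"
proof -
  have inj: "inj_on g S"
  proof (rule inj_onI)
    fix m m' assume "m \<in> S" "m' \<in> S" "g m = g m'"
    then show "m = m'"
      using delta[of m m'] delta[of m' m'] by (auto split: if_splits)
  qed
  have coord: "(\<Sum>v\<in>g ` S. cscale (u v) v) m = u (g m)" if "m \<in> S" for u m
  proof -
    have "(\<Sum>v\<in>g ` S. cscale (u v) v) m = (\<Sum>m'\<in>S. if m' = m then u (g m') else 0)"
      using delta \<open>m \<in> S\<close> by (auto simp: sum.reindex[OF inj] sum_fun_apply cscale_def intro!: sum.cong)
    also have "\<dots> = u (g m)"
      using fin \<open>m \<in> S\<close> by simp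
    finally show ?thesis .
  qed
  have "VS.independent (g ` S)"
    unfolding VS.dependent_finite[OF finite_imageI[OF fin]]
  proof
    assume "\<exists>u. (\<exists>v\<in>g ` S. u v \<noteq> 0) \<and> (\<Sum>v\<in>g ` S. cscale (u v) v) = 0"
    then obtain u m where "m \<in> S" "u (g m) \<noteq> 0" "(\<Sum>v\<in>g ` S. cscale (u v) v) = 0"
      by blast
    with coord[of m u] show False
      by simp
  qed
  from VS.basis_card_eq_dim[OF mem span this] show ?thesis
    using card_image[OF inj] by simp
qed

text \<open>For \<open>s = 0\<close> these represent the \<open>S\<^sub>3\<close>-orbits of monomials of degree \<open>j\<close>, for \<open>s = 1\<close>
  the orbits of monomials with three distinct exponents.\<close>

definition sorted_triples :: "nat \<Rightarrow> nat \<Rightarrow> expo set" where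
  "sorted_triples s j = {(a, b, c). a + s \<le> b \<and> b + s \<le> c \<and> a + b + c = j}"

lemma finite_sorted_triples: "finite (sorted_triples s j)"
  by (rule finite_subset[of _ "{0..j} \<times> {0..j} \<times> {0..j}"]) (auto simp: sorted_triples_def)

definition sort3 :: "expo \<Rightarrow> expo" where
  "sort3 m = (case m of (a, b, c) \<Rightarrow>
     (min a (min b c), a + b + c - min a (min b c) - max a (max b c), max a (max b c)))"

text \<open>The scalar by which an isotypic function changes when its argument is sorted.\<close>

definition sort_sign :: "'a::field \<Rightarrow> expo \<Rightarrow> 'a" where
  "sort_sign e m = (case m of (a, b, c) \<Rightarrow>
     (if a \<le> b then 1 else e) * (if b \<le> c then 1 else e) * (if a \<le> c then 1 else e))"

definition orbit_vec :: "'a::field \<Rightarrow> expo \<Rightarrow> expo \<Rightarrow> 'a" where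
  "orbit_vec e m = (\<lambda>x. if sort3 x = m then sort_sign e x else 0)"

lemma sort3_swap12: "sort3 (b, a, c) = sort3 (a, b, c)"
  and sort3_swap23: "sort3 (a, c, b) = sort3 (a, b, c)"
  by (auto simp: sort3_def min_def max_def)

lemma sort3_sorted: "a \<le> b \<Longrightarrow> b \<le> c \<Longrightarrow> sort3 (a, b, c) = (a, b, c)"
  by (auto simp: sort3_def min_def max_def)

lemma sort3_sum: "sort3 (a, b, c) = (p, q, r) \<Longrightarrow> p \<le> q \<and> q \<le> r \<and> p + q + r = a + b + c"
  by (auto simp: sort3_def min_def max_def)

lemma sort3_strict_imp_distinct:
  "sort3 (a, b, c) = (p, q, r) \<Longrightarrow> p < q \<Longrightarrow> q < r \<Longrightarrow> a \<noteq> b \<and> b \<noteq> c \<and> a \<noteq> c"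
  by (auto simp: sort3_def min_def max_def split: if_splits)

lemma sort_sign_sorted: "a \<le> b \<Longrightarrow> b \<le> c \<Longrightarrow> sort_sign e (a, b, c) = 1"
  by (simp add: sort_sign_def)

lemma sort_sign_square: "e * e = 1 \<Longrightarrow> sort_sign e m * sort_sign e m = 1"
  by (cases m) (auto simp: sort_sign_def algebra_simps)

lemma sort_sign_swap12: "e * e = 1 \<Longrightarrow> (a = b \<Longrightarrow> e = 1) \<Longrightarrow> sort_sign e (b, a, c) = e * sort_sign e (a, b, c)"
  and sort_sign_swap23: "e * e = 1 \<Longrightarrow> (b = c \<Longrightarrow> e = 1) \<Longrightarrow> sort_sign e (a, c, b) = e * sort_sign e (a, b, c)"
  by (auto simp: sort_sign_def algebra_simps)

lemma isotypic_sort3: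
  assumes f: "f \<in> isotypic e d j"
  shows "f (sort3 (a, b, c)) = sort_sign e (a, b, c) * f (a, b, c)"
proof -
  note s12 = isotypic_swap12[OF f] and s23 = isotypic_swap23[OF f]
  consider "a \<le> b" "b \<le> c" | "a \<le> b" "c < b" "a \<le> c" | "a \<le> b" "c < b" "c < a"
    | "b < a" "b \<le> c" "a \<le> c" | "b < a" "b \<le> c" "c < a" | "b < a" "c < b"
    by linarith
  then show ?thesis
  proof cases
    case 1
    then show ?thesis by (simp add: sort3_sorted sort_sign_def)
  next
    case 2
    then have "sort3 (a, b, c) = (a, c, b)" by (auto simp: sort3_def min_def max_def)
    then show ?thesis using 2 s23[of a c b] by (simp add: sort_sign_def)
  next
    case 3
    then have "sort3 (a, b, c) = (c, a, b)" by (auto simp: sort3_def min_def max_def)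
    then show ?thesis using 3 s12[of c a b] s23[of a c b] by (simp add: sort_sign_def)
  next
    case 4
    then have "sort3 (a, b, c) = (b, a, c)" by (auto simp: sort3_def min_def max_def)
    then show ?thesis using 4 s12[of b a c] by (simp add: sort_sign_def)
  next
    case 5
    then have "sort3 (a, b, c) = (b, c, a)" by (auto simp: sort3_def min_def max_def)
    then show ?thesis using 5 s23[of b c a] s12[of b a c] by (simp add: sort_sign_def)
  next
    case 6
    then have "sort3 (a, b, c) = (c, b, a)" by (auto simp: sort3_def min_def max_def)
    then show ?thesis using 6 s12[of c b a] s23[of b c a] s12[of b a c] by (simp add: sort_sign_def)
  qed
qed

lemma isotypic_tie:
  assumes f: "f \<in> isotypic e d j" and e: "e \<noteq> 1"
  shows "f (p, p, r) = 0" and "f (p, q, q) = 0"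
proof -
  have "(1 - e) * f (p, p, r) = 0" "(1 - e) * f (p, q, q) = 0"
    using isotypic_swap12[OF f, of p p r] isotypic_swap23[OF f, of p q q] by (simp_all add: algebra_simps)
  with e show "f (p, p, r) = 0" "f (p, q, q) = 0"
    by simp_all
qed

lemma orbit_vec_delta:
  "m \<in> sorted_triples s j \<Longrightarrow> m' \<in> sorted_triples s j \<Longrightarrow> orbit_vec e m m' = (if m = m' then 1 else 0)"
  by (auto simp: orbit_vec_def sorted_triples_def sort3_sorted sort_sign_sorted)

lemma orbit_vec_isotypic:
  fixes e :: "'a::field"
  assumes e: "e * e = 1" and m: "m \<in> sorted_triples (if e = 1 then 0 else 1) j" and j: "j < d"
  shows "orbit_vec e m \<in> isotypic e d j"
proof (rule isotypicI)
  have sum: "a + b + c = j" if "sort3 (a, b, c) = m" for a b c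
    using m sort3_sum[of a b c] that by (cases m) (auto simp: sorted_triples_def)
  have distinct: "a \<noteq> b \<and> b \<noteq> c \<and> a \<noteq> c" if "sort3 (a, b, c) = m" "e \<noteq> 1" for a b c
    using m sort3_strict_imp_distinct[of a b c] that by (cases m) (auto simp: sorted_triples_def)
  show "orbit_vec e m \<in> Agr d j"
  proof (rule AgrI)
    fix a b c
    assume "\<not> (a < d \<and> b < d \<and> c < d \<and> a + b + c = j)"
    then show "orbit_vec e m (a, b, c) = 0"
      using sum[of a b c] j by (auto simp: orbit_vec_def)
  qed
  fix a b c
  show "orbit_vec e m (b, a, c) = e * orbit_vec e m (a, b, c)"
    using distinct[of a b c] sort_sign_swap12[OF e, of a b c] by (auto simp: orbit_vec_def sort3_swap12)
  show "orbit_vec e m (a, c, b) = e * orbit_vec e m (a, b, c)"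
    using distinct[of a b c] sort_sign_swap23[OF e, of b c a] by (auto simp: orbit_vec_def sort3_swap23)
qed

lemma isotypic_expansion:
  fixes f :: "expo \<Rightarrow> 'a::field"
  assumes f: "f \<in> isotypic e d j" and e: "e * e = 1"
  shows "f = (\<Sum>m\<in>sorted_triples (if e = 1 then 0 else 1) j. cscale (f m) (orbit_vec e m))"
proof (rule ext, clarify)
  fix a b c :: nat
  let ?S = "sorted_triples (if e = 1 then 0 else 1) j" and ?x = "(a, b, c)"
  have "(\<Sum>m\<in>?S. cscale (f m) (orbit_vec e m)) ?x = (\<Sum>m\<in>?S. if sort3 ?x = m then f m * sort_sign e ?x else 0)"
    by (auto simp: sum_fun_apply cscale_def orbit_vec_def intro!: sum.cong)
  also have "\<dots> = (if sort3 ?x \<in> ?S then f (sort3 ?x) * sort_sign e ?x else 0)"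
    using finite_sorted_triples by (rule sum.delta')
  also have "\<dots> = f ?x"
  proof (cases "sort3 ?x \<in> ?S")
    case True
    then show ?thesis
      using isotypic_sort3[OF f] sort_sign_square[OF e, of ?x] by (simp add: algebra_simps)
  next
    case False
    obtain p q r where pqr: "sort3 ?x = (p, q, r)"
      by (cases "sort3 ?x")
    have "f ?x = 0"
    proof (cases "a + b + c = j")
      case True
      with False pqr sort3_sum[OF pqr] have "e \<noteq> 1" "p = q \<or> q = r"
        by (auto simp: sorted_triples_def split: if_splits)
      then have "sort_sign e ?x * f ?x = 0"
        using isotypic_sort3[OF f, of a b c] isotypic_tie[OF f] pqr by auto
      then show ?thesis
        using sort_sign_square[OF e, of ?x] by auto
    qed (rule Agr_eq_zero_degree[OF isotypic_Agr[OF f]])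
    with False show ?thesis
      by simp
  qed
  finally show "f ?x = (\<Sum>m\<in>?S. cscale (f m) (orbit_vec e m)) ?x"
    by simp
qed

lemma isotypic_subset_span:
  fixes e :: "'a::field"
  assumes "e * e = 1"
  shows "isotypic e d j \<subseteq> VS.span (orbit_vec e ` sorted_triples (if e = 1 then 0 else 1) j)"
proof
  fix f assume "f \<in> isotypic e d j"
  then have "f = (\<Sum>m\<in>sorted_triples (if e = 1 then 0 else 1) j. cscale (f m) (orbit_vec e m))"
    using assms by (rule isotypic_expansion)
  also have "\<dots> \<in> VS.span (orbit_vec e ` sorted_triples (if e = 1 then 0 else 1) j)"
    by (intro VS.span_sum VS.span_scale VS.span_base) auto
  finally show "f \<in> VS.span (orbit_vec e ` sorted_triples (if e = 1 then 0 else 1) j)" .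
qed

lemma dim_isotypic:
  fixes e :: "'a::field"
  assumes "e * e = 1" "j < d"
  shows "VS.dim (isotypic e d j) = card (sorted_triples (if e = 1 then 0 else 1) j)"
proof (rule dim_eq_card_of_delta_family[OF finite_sorted_triples])
  show "orbit_vec e ` sorted_triples (if e = 1 then 0 else 1) j \<subseteq> isotypic e d j"
    using orbit_vec_isotypic[OF assms(1) _ assms(2)] by blast
  show "isotypic e d j \<subseteq> VS.span (orbit_vec e ` sorted_triples (if e = 1 then 0 else 1) j)"
    by (rule isotypic_subset_span[OF assms(1)])
qed (rule orbit_vec_delta)

section \<open>Multiplicities\<close>

lemma sorted_triples_Suc:
  "sorted_triples s (Suc j) = (\<lambda>(a, b, c). (a, b, Suc c)) ` sorted_triples s j
     \<union> (\<lambda>b. (Suc j - 2 * b - s, b, b + s)) ` {b. Suc j \<le> 3 * b \<and> 2 * b + s \<le> Suc j}"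
proof (intro equalityI subsetI)
  fix x assume "x \<in> sorted_triples s (Suc j)"
  then obtain a b c where x: "x = (a, b, c)" "a + s \<le> b" "b + s \<le> c" "a + b + c = Suc j"
    by (auto simp: sorted_triples_def)
  show "x \<in> (\<lambda>(a, b, c). (a, b, Suc c)) ` sorted_triples s j
     \<union> (\<lambda>b. (Suc j - 2 * b - s, b, b + s)) ` {b. Suc j \<le> 3 * b \<and> 2 * b + s \<le> Suc j}"
  proof (cases "c = b + s")
    case True
    with x show ?thesis by force
  next
    case False
    with x have "(a, b, c - 1) \<in> sorted_triples s j" "x = (a, b, Suc (c - 1))"
      by (auto simp: sorted_triples_def)
    then show ?thesis by force
  qed
qed (auto simp: sorted_triples_def)

lemma card_sorted_triples_Suc:
  "card (sorted_triples s (Suc j)) = card (sorted_triples s j) + card {b. Suc j \<le> 3 * b \<and> 2 * b + s \<le> Suc j}"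
proof -
  have "finite {b. Suc j \<le> 3 * b \<and> 2 * b + s \<le> Suc j}"
    by (rule finite_subset[of _ "{..Suc j}"]) auto
  moreover have "inj_on (\<lambda>(a, b, c). (a, b, Suc c)) (sorted_triples s j)"
    by (auto simp: inj_on_def)
  moreover have "inj_on (\<lambda>b. (Suc j - 2 * b - s, b, b + s)) B" for B
    by (auto simp: inj_on_def)
  moreover have "(\<lambda>(a, b, c). (a, b, Suc c)) ` sorted_triples s j
      \<inter> (\<lambda>b. (Suc j - 2 * b - s, b, b + s)) ` {b. Suc j \<le> 3 * b \<and> 2 * b + s \<le> Suc j} = {}"
    by (auto simp: sorted_triples_def)
  ultimately show ?thesis
    unfolding sorted_triples_Suc by (simp add: card_Un_disjoint finite_sorted_triples card_image)
qed

lemma card_sorted_triples_0: "card (sorted_triples s 0) = card {b. 0 \<le> 3 * b \<and> 2 * b + s \<le> 0}"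
proof -
  have "sorted_triples s 0 = (\<lambda>b. (0, b, b)) ` {b. 0 \<le> 3 * b \<and> 2 * b + s \<le> 0}"
    by (auto simp: sorted_triples_def)
  then show ?thesis
    by (simp add: card_image inj_on_def)
qed

lemma card_top_layer: "s \<le> 2 \<Longrightarrow> card {b::nat. j \<le> 3 * b \<and> 2 * b + s \<le> j} = (j + 2 - s) div 2 - (j + 2) div 3"
proof -
  assume "s \<le> 2"
  then have "{b::nat. j \<le> 3 * b \<and> 2 * b + s \<le> j} = {(j + 2) div 3 ..< (j + 2 - s) div 2}"
    by auto
  then show ?thesis by simp
qed

lemma dim_isotypic_kernel:
  fixes e :: "'a::field_char_0"
  assumes e: "e * e = 1" and j: "j < d"
  shows "VS.dim {f \<in> isotypic e d j. Eop d f = 0} = card {b. j \<le> 3 * b \<and> 2 * b + (if e = 1 then 0 else 1) \<le> j}"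
proof (cases j)
  case 0
  then have "{f \<in> isotypic e d j. Eop d f = 0} = isotypic e d j"
    using Eop_Agr_0 isotypic_Agr by blast
  then show ?thesis
    using dim_isotypic[OF e j] card_sorted_triples_0 0 by simp
next
  case (Suc i)
  have "VS.dim {f \<in> isotypic e d (Suc i). Eop d f = 0} = VS.dim (isotypic e d (Suc i)) - VS.dim (isotypic e d i)"
  proof (rule VS.dim_kernel_eq_diff[OF linear_Eop linear_Lop isotypic_subspace isotypic_subspace
        isotypic_subset_span[OF e] finite_imageI[OF finite_sorted_triples]
        isotypic_subset_span[OF e] finite_imageI[OF finite_sorted_triples]])
    show "Eop d ` isotypic e d (Suc i) \<subseteq> isotypic e d i"
      using Eop_isotypic[of _ e d "Suc i"] by auto
    show "Lop ` isotypic e d i \<subseteq> isotypic e d (Suc i)"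
      using Lop_isotypic[of _ e d i] Suc j by auto
    show "x = 0" if "x \<in> isotypic e d i" "Eop d (Lop x) = 0" for x
      using Eop_Lop_injective[OF isotypic_Agr[OF that(1)]] Suc j that(2) by simp
  qed
  then show ?thesis
    using dim_isotypic[OF e] j Suc card_sorted_triples_Suc by simp
qed

lemma mod6_cases:
  fixes j :: nat
  obtains q where "j = 6 * q" | q where "j = 6 * q + 1" | q where "j = 6 * q + 2"
    | q where "j = 6 * q + 3" | q where "j = 6 * q + 4" | q where "j = 6 * q + 5"
proof -
  have "j mod 6 \<in> {0, 1, 2, 3, 4, 5}"
    by auto
  with div_mult_mod_eq[of j 6] show ?thesis
    using that by (metis add.commute add_0 empty_iff insert_iff mult.commute)
qed

lemma triv_count:
  fixes j :: nat
  shows "(j + 2) div 2 - (j + 2) div 3 = (if odd j then (j + 3) div 6 else j div 6 + 1)"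
  by (cases j rule: mod6_cases) simp_all

lemma sign_count:
  fixes j :: nat
  shows "(j + 1) div 2 - (j + 2) div 3 = (if odd j then (j + 3) div 6 else j div 6)"
  by (cases j rule: mod6_cases) simp_all

lemma triv_eq:
  assumes "j < d"
  shows "triv TYPE('a::field_char_0) d j = (if odd j then (j + 3) div 6 else j div 6 + 1)"
proof -
  have "triv TYPE('a) d j = (j + 2) div 2 - (j + 2) div 3"
    unfolding triv_def vdim_def triv_part_eq
    using dim_isotypic_kernel[of "1 :: 'a", OF _ assms] card_top_layer[of 0 j] by simp
  then show ?thesis
    by (simp only: triv_count)
qed

lemma sgn_mult_eq:
  assumes "j < d"
  shows "sgn_mult TYPE('a::field_char_0) d j = (if odd j then (j + 3) div 6 else j div 6)"
proof -
  have "sgn_mult TYPE('a) d j = (j + 1) div 2 - (j + 2) div 3"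
    unfolding sgn_mult_def vdim_def sign_part_eq
    using dim_isotypic_kernel[of "- 1 :: 'a", OF _ assms] card_top_layer[of 1 j] by simp
  then show ?thesis
    by (simp only: sign_count)
qed

lemma floor_sixth_sub_half:
  fixes X Y :: int
  assumes "even Y"
  shows "real_of_int \<lfloor>real_of_int X / 6\<rfloor> - real_of_int Y / 2 = real_of_int ((X - 3 * Y) div 6)"
proof -
  obtain k where k: "Y = 2 * k"
    using assms by blast
  have "X - 3 * Y = X + (- k) * 6"
    using k by simp
  then have "(X - 3 * Y) div 6 = X div 6 - k"
    by simp
  then show ?thesis
    using floor_divide_of_int_eq[where 'a=real, of X 6] k by simp
qed

lemma real_eq_floor_formula:
  fixes d j n :: nat and c e :: int
  assumes "even (int d - int j - e)" "int n = (int j + 3 * e - c) div 6"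
  shows "real n = \<lfloor>(3 * real d - 2 * real j - of_int c) / 6\<rfloor> - (real d - real j - of_int e) / 2"
proof -
  have "real_of_int \<lfloor>real_of_int (3 * int d - 2 * int j - c) / 6\<rfloor> - real_of_int (int d - int j - e) / 2
      = real_of_int ((3 * int d - 2 * int j - c - 3 * (int d - int j - e)) div 6)"
    by (rule floor_sixth_sub_half[OF assms(1)])
  also have "3 * int d - 2 * int j - c - 3 * (int d - int j - e) = int j + 3 * e - c"
    by simp
  finally show ?thesis
    using assms(2) by simp
qed

theorem theorem5p3:
  fixes d j :: nat
  assumes alg_closed: "\<And>p :: 'a::field_char_0 poly. degree p > 0 \<Longrightarrow> \<exists>x. poly p x = 0"
    and d3: "d \<ge> 3" and jd: "j \<le> d - 1"
  shows
   "(odd d \<and> even (d - j) \<longrightarrow>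
       real (triv TYPE('a) d j) = \<lfloor>(3 * real d - 2 * real j - 3) / 6\<rfloor> - (real d - real j - 2) / 2 \<and>
       real (sgn_mult TYPE('a) d j) = \<lfloor>(3 * real d - 2 * real j - 3) / 6\<rfloor> - (real d - real j - 2) / 2)
  \<and> (odd d \<and> odd (d - j) \<longrightarrow>
       real (triv TYPE('a) d j) = \<lfloor>(3 * real d - 2 * real j - 3) / 6\<rfloor> - (real d - real j - 3) / 2 \<and>
       real (sgn_mult TYPE('a) d j) = \<lfloor>(3 * real d - 2 * real j - 3) / 6\<rfloor> - (real d - real j - 1) / 2)
  \<and> (even d \<and> even (d - j) \<longrightarrow>
       real (triv TYPE('a) d j) = \<lfloor>(3 * real d - 2 * real j) / 6\<rfloor> - (real d - real j - 2) / 2 \<and>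
       real (sgn_mult TYPE('a) d j) = \<lfloor>(3 * real d - 2 * real j) / 6\<rfloor> - (real d - real j) / 2)
  \<and> (even d \<and> odd (d - j) \<longrightarrow>
       real (triv TYPE('a) d j) = \<lfloor>(3 * real d - 2 * real j) / 6\<rfloor> - (real d - real j - 1) / 2 \<and>
       real (sgn_mult TYPE('a) d j) = \<lfloor>(3 * real d - 2 * real j) / 6\<rfloor> - (real d - real j - 1) / 2)"
proof -
  have j: "j < d"
    using d3 jd by simp
  note T = triv_eq[OF j, where 'a='a] and S = sgn_mult_eq[OF j, where 'a='a]
  note F = real_eq_floor_formula[of d j]
  have dj: "int d - int j = int (d - j)"
    using j by simp
  show ?thesis
  proof (intro conjI impI)
    assume "odd d \<and> even (d - j)"
    then have par: "odd j" "even (int d - int j - 2)"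
      using j unfolding dj by (auto simp: even_diff_nat)
    show "real (triv TYPE('a) d j) = \<lfloor>(3 * real d - 2 * real j - 3) / 6\<rfloor> - (real d - real j - 2) / 2"
      using par F[where e=2 and c=3 and n="triv TYPE('a) d j"] by (simp add: T zdiv_int)
    show "real (sgn_mult TYPE('a) d j) = \<lfloor>(3 * real d - 2 * real j - 3) / 6\<rfloor> - (real d - real j - 2) / 2"
      using par F[where e=2 and c=3 and n="sgn_mult TYPE('a) d j"] by (simp add: S zdiv_int)
  next
    assume "odd d \<and> odd (d - j)"
    then have par: "even j" "even (int d - int j - 3)" "even (int d - int j - 1)"
      using j unfolding dj by (auto simp: even_diff_nat)
    show "real (triv TYPE('a) d j) = \<lfloor>(3 * real d - 2 * real j - 3) / 6\<rfloor> - (real d - real j - 3) / 2"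
      using par F[where e=3 and c=3 and n="triv TYPE('a) d j"] by (simp add: T zdiv_int)
    show "real (sgn_mult TYPE('a) d j) = \<lfloor>(3 * real d - 2 * real j - 3) / 6\<rfloor> - (real d - real j - 1) / 2"
      using par F[where e=1 and c=3 and n="sgn_mult TYPE('a) d j"] by (simp add: S zdiv_int)
  next
    assume "even d \<and> even (d - j)"
    then have par: "even j" "even (int d - int j - 2)" "even (int d - int j)"
      using j unfolding dj by (auto simp: even_diff_nat)
    show "real (triv TYPE('a) d j) = \<lfloor>(3 * real d - 2 * real j) / 6\<rfloor> - (real d - real j - 2) / 2"
      using par F[where e=2 and c=0 and n="triv TYPE('a) d j"] by (simp add: T zdiv_int)
    show "real (sgn_mult TYPE('a) d j) = \<lfloor>(3 * real d - 2 * real j) / 6\<rfloor> - (real d - real j) / 2"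
      using par F[where e=0 and c=0 and n="sgn_mult TYPE('a) d j"] by (simp add: S zdiv_int)
  next
    assume "even d \<and> odd (d - j)"
    then have par: "odd j" "even (int d - int j - 1)"
      using j unfolding dj by (auto simp: even_diff_nat)
    show "real (triv TYPE('a) d j) = \<lfloor>(3 * real d - 2 * real j) / 6\<rfloor> - (real d - real j - 1) / 2"
      using par F[where e=1 and c=0 and n="triv TYPE('a) d j"] by (simp add: T zdiv_int)
    show "real (sgn_mult TYPE('a) d j) = \<lfloor>(3 * real d - 2 * real j) / 6\<rfloor> - (real d - real j - 1) / 2"
      using par F[where e=1 and c=0 and n="sgn_mult TYPE('a) d j"] by (simp add: S zdiv_int)
  qed
qed

end
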